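(* Let $L$ be a right pre-Lie algebra over $k$ with product $\curvearrowleft$, and let $l,l_1,\ldots,l_n\in L$. Then the symmetric brace $\{l;l_1\cdots l_n\}:=l\curvearrowleft(l_1\cdots l_n)$ satisfies $$ \{l;l_1\cdots l_n\}=\sum_{\{P_1,\ldots,P_k\}}(-1)^{n-k}\Big(\cdots\big((l\curvearrowleft l_{P_1})\curvearrowleft l_{P_2}\big)\cdots\curvearrowleft l_{P_k}\Big), $$ where the sum runs over all set partitions $\{P_1,\ldots,P_k\}$ of $\{1,\ldots,n\}$ with blocks indexed so that $\max P_1<\cdots<\max P_k$, and for a block $P_i=\{p_1<\cdots<p_h\}$, $l_{P_i}:=\sum_{\sigma\in S_{h-1}} l_{p_{\sigma(1)}}\curvearrowleft\big(l_{p_{\sigma(2)}}\curvearrowleft(\cdots\curvearrowleft(l_{p_{\sigma(h-1)}}\curvearrowleft l_{p_h})\cdots)\big)$ (for $h=1$, $l_{P_i}=l_{p_1}$).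
   Context: $k$ is a field of characteristic zero. A right pre-Lie algebra is a vector space $L$ with bilinear product $\curvearrowleft$ satisfying $(x\curvearrowleft y)\curvearrowleft z-x\curvearrowleft(y\curvearrowleft z)=(x\curvearrowleft z)\curvearrowleft y-x\curvearrowleft(z\curvearrowleft y)$. The action of the symmetric algebra $S(L)$ (commutative product written as juxtaposition) on $L$ is defined recursively by $l\curvearrowleft 1=l$ and, for $l,l_1,\ldots,l_n\in L$, $l\curvearrowleft(l_1\cdots l_n)=(l\curvearrowleft(l_1\cdots l_{n-1}))\curvearrowleft l_n-\sum_{i=1}^{n-1}l\curvearrowleft(l_1\cdots l_{i-1}(l_i\curvearrowleft l_n)l_{i+1}\cdots l_{n-1})$. *)

theory Defs
  imports Main "HOL.Vector_Spaces" "HOL-Combinatorics.Permutations" "HOL-Library.Disjoint_Sets"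
begin

definition right_pre_Lie ::
  "('k::field \<Rightarrow> 'v::ab_group_add \<Rightarrow> 'v) \<Rightarrow> ('v \<Rightarrow> 'v \<Rightarrow> 'v) \<Rightarrow> bool" where
  "right_pre_Lie scale rp \<longleftrightarrow>
     vector_space scale \<and>
     (\<forall>x y z. rp (x + y) z = rp x z + rp y z) \<and>
     (\<forall>x y z. rp x (y + z) = rp x y + rp x z) \<and>
     (\<forall>c x y. rp (scale c x) y = scale c (rp x y)) \<and>
     (\<forall>c x y. rp x (scale c y) = scale c (rp x y)) \<and>
     (\<forall>x y z. rp (rp x y) z - rp x (rp y z) = rp (rp x z) y - rp x (rp z y))"

text \<open>Symmetric brace l \<curvearrowleft> (l_1 \<cdots> l_n), with the monomial l_1 \<cdots> l_n given by
  f 1, ..., f n; defined by the recursion of the paper (recursion on n).\<close>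

fun sbrace :: "('v::ab_group_add \<Rightarrow> 'v \<Rightarrow> 'v) \<Rightarrow> 'v \<Rightarrow> (nat \<Rightarrow> 'v) \<Rightarrow> nat \<Rightarrow> 'v" where
  "sbrace rp l f 0 = l"
| "sbrace rp l f (Suc n) =
     rp (sbrace rp l f n) (f (Suc n))
     - (\<Sum>i\<in>{1..n}. sbrace rp l (f(i := rp (f i) (f (Suc n)))) n)"

definition block_elt :: "('v::ab_group_add \<Rightarrow> 'v \<Rightarrow> 'v) \<Rightarrow> (nat \<Rightarrow> 'v) \<Rightarrow> nat set \<Rightarrow> 'v" where
  "block_elt rp f P =
     (let ps = sorted_list_of_set P; h = length ps in
      \<Sum>\<sigma> \<in> {\<sigma>. \<sigma> permutes {1..h-1}}.
        foldr (\<lambda>i acc. rp (f (ps ! (\<sigma> i - 1))) acc) [1..<h] (f (ps ! (h - 1))))"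

definition partition_term ::
  "('v::ab_group_add \<Rightarrow> 'v \<Rightarrow> 'v) \<Rightarrow> 'v \<Rightarrow> (nat \<Rightarrow> 'v) \<Rightarrow> nat set set \<Rightarrow> 'v" where
  "partition_term rp l f \<P> =
     foldl (\<lambda>acc P. rp acc (block_elt rp f P)) l (sorted_key_list_of_set Max \<P>)"

end

theory Submission
  imports Defs "HOL-Combinatorics.Multiset_Permutations"
begin

(* The pre-Lie identity makes the symmetric brace {l; x_1 ... x_n} invariant under swapping its
   last two arguments, and the defining recursion propagates this to invariance under all
   permutations. Symmetry lets the recursion be unfolded along the last argument z:
     {l; X z} = sum over C \<subseteq> X of (-1)^|C| {l; X - C} \<curvearrowleft> W_C(z),
   where W_C(z) (comb_sum) sums the right combs x_c1 \<curvearrowleft> (... \<curvearrowleft> (x_ck \<curvearrowleft> z)) over all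
   orderings of C. For z = l_n, W_C(l_n) is the block element of C \<union> {n}, the last block of the
   partition, so induction on n yields the partition formula. *)

lemma length_snoc_induct [case_names Nil snoc]:
  assumes "P []"
    and "\<And>xs y. (\<And>ys. length ys = length xs \<Longrightarrow> P ys) \<Longrightarrow> P (xs @ [y])"
  shows "P xs"
proof (induction "length xs" arbitrary: xs)
  case 0
  then show ?case using assms(1) by simp
next
  case (Suc n)
  then obtain ys y where "xs = ys @ [y]"
    by (metis length_0_conv nat.distinct(1) rev_exhaust)
  then show ?case using Suc by (auto intro: assms(2))
qed

lemma sum_Pow_remove_swap:
  assumes "finite S"
  shows "(\<Sum>i\<in>S. \<Sum>C\<in>Pow (S - {i}). g i C) = (\<Sum>D\<in>Pow S. \<Sum>i\<in>D. g i (D - {i}))"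
proof -
  have "(\<Sum>C\<in>Pow (S - {i}). g i C) = (\<Sum>D\<in>{D\<in>Pow S. i \<in> D}. g i (D - {i}))" if "i \<in> S" for i
    by (rule sum.reindex_bij_witness[where i="\<lambda>D. D - {i}" and j="insert i"])
      (use that in \<open>auto simp: subset_Diff_insert Diff_triv\<close>)
  then have "(\<Sum>i\<in>S. \<Sum>C\<in>Pow (S - {i}). g i C) = (\<Sum>i\<in>S. \<Sum>D\<in>{D\<in>Pow S. i \<in> D}. g i (D - {i}))"
    by simp
  also have "\<dots> = (\<Sum>D\<in>Pow S. \<Sum>i\<in>{i\<in>S. i \<in> D}. g i (D - {i}))"
    by (rule sum.swap_restrict) (use assms in auto)
  also have "\<dots> = (\<Sum>D\<in>Pow S. \<Sum>i\<in>D. g i (D - {i}))"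
    by (auto intro!: sum.cong)
  finally show ?thesis .
qed

lemma bij_betw_map_permutes:
  assumes "distinct xs"
  shows "bij_betw (\<lambda>\<sigma>. map \<sigma> xs) {\<sigma>. \<sigma> permutes set xs} (permutations_of_set (set xs))"
proof -
  have inj: "inj_on (\<lambda>\<sigma>. map \<sigma> xs) {\<sigma>. \<sigma> permutes set xs}"
  proof (rule inj_onI)
    fix \<sigma> \<tau> assume "\<sigma> \<in> {\<sigma>. \<sigma> permutes set xs}" "\<tau> \<in> {\<sigma>. \<sigma> permutes set xs}" "map \<sigma> xs = map \<tau> xs"
    then show "\<sigma> = \<tau>"
      by (metis map_eq_conv mem_Collect_eq permutes_not_in ext)
  qed
  have into: "(\<lambda>\<sigma>. map \<sigma> xs) ` {\<sigma>. \<sigma> permutes set xs} \<subseteq> permutations_of_set (set xs)"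
    using assms by (auto simp: permutes_image permutes_inj_on distinct_map permutations_of_set_def)
  have "card ((\<lambda>\<sigma>. map \<sigma> xs) ` {\<sigma>. \<sigma> permutes set xs}) = card (permutations_of_set (set xs))"
    using card_image[OF inj] assms by (simp add: card_permutations distinct_card)
  then show ?thesis
    using inj into by (simp add: bij_betw_def card_subset_eq)
qed

lemma bij_betw_map_permutations_of_set:
  assumes "inj_on f A"
  shows "bij_betw (map f) (permutations_of_set A) (permutations_of_set (f ` A))"
  unfolding bij_betw_def permutations_of_set_image_inj[OF assms]
  by (auto intro!: inj_on_mapI inj_on_subset[OF assms] dest: permutations_of_setD)

lemma sum_permutations_of_set_rev:
  "(\<Sum>ws\<in>permutations_of_set A. g (rev ws)) = (\<Sum>ws\<in>permutations_of_set A. g ws)"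
proof -
  have "inj_on rev (permutations_of_set A)"
    by (simp add: inj_on_def)
  then show ?thesis
    using sum.reindex[of rev "permutations_of_set A" g] by (simp add: comp_def)
qed

lemma sum_permutes_nth:
  assumes "distinct xs"
  shows "(\<Sum>\<sigma>\<in>{\<sigma>. \<sigma> permutes {1..length xs}}. F (map (\<lambda>i. xs ! (\<sigma> i - 1)) [1..<length xs + 1]))
    = (\<Sum>ws\<in>permutations_of_set (set xs). F ws)"
proof -
  define e where "e i = xs ! (i - 1)" for i
  have "inj_on e {1..length xs}"
    using assms by (auto simp: inj_on_def e_def nth_eq_iff_index_eq)
  moreover have "e ` {1..length xs} = set xs"
    unfolding image_Suc_lessThan[symmetric] by (auto simp: e_def in_set_conv_nth image_image)
  ultimately have "bij_betw (map e) (permutations_of_set {1..length xs}) (permutations_of_set (set xs))"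
    using bij_betw_map_permutations_of_set by metis
  moreover have "bij_betw (\<lambda>\<sigma>. map \<sigma> [1..<length xs + 1]) {\<sigma>. \<sigma> permutes {1..length xs}}
      (permutations_of_set {1..length xs})"
    using bij_betw_map_permutes[of "[1..<length xs + 1]"] by (simp add: atLeastLessThanSuc_atLeastAtMost del: upt_Suc)
  ultimately have "bij_betw (map e \<circ> (\<lambda>\<sigma>. map \<sigma> [1..<length xs + 1])) {\<sigma>. \<sigma> permutes {1..length xs}}
      (permutations_of_set (set xs))"
    by (rule bij_betw_trans[rotated])
  then show ?thesis
    by (simp add: sum.reindex_bij_betw[symmetric] e_def comp_def del: upt_Suc)
qed

lemma sum_sorted_list_of_set_nth:
  assumes "finite S"
  shows "(\<Sum>j<card S. g (sorted_list_of_set S ! j)) = (\<Sum>i\<in>S. g i)"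
proof -
  have "(\<Sum>j<card S. g (sorted_list_of_set S ! j)) = sum_list (map g (sorted_list_of_set S))"
    by (simp add: sum_list_sum_nth atLeast0LessThan assms)
  also have "\<dots> = (\<Sum>i\<in>S. g i)"
    by (simp add: sum_list_distinct_conv_sum_set assms)
  finally show ?thesis .
qed

lemma mset_sorted_list_of_set: "mset (sorted_list_of_set A) = mset_set A"
  by (metis mset_sorted_list_of_multiset sorted_list_of_mset_set)

lemma sorted_list_of_set_insert_greatest:
  assumes "finite A" "\<forall>a\<in>A. a < x"
  shows "sorted_list_of_set (insert x A) = sorted_list_of_set A @ [x]"
proof -
  have "A - {x} = A"
    using assms(2) by blast
  then show ?thesis
    using assms by (simp add: sorted_insort_is_snoc less_imp_le)
qed

(* Interpreting folding_insort_key at a concrete order produces the locale constants below, which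
   differ syntactically from the class constants appearing in partition_term. *)
lemma linorder_insort_key_eq: "linorder.insort_key ((\<le>) :: 'a::linorder \<Rightarrow> 'a \<Rightarrow> bool) = insort_key"
  by (intro ext, rename_tac x xs, induct_tac xs)
    (simp_all add: linorder.insort_key.simps[OF linorder_class.linorder_axioms])

lemma linorder_sorted_key_list_of_set_eq:
  "linorder.sorted_key_list_of_set ((\<le>) :: 'a::linorder \<Rightarrow> 'a \<Rightarrow> bool) = sorted_key_list_of_set"
  by (simp add: fun_eq_iff linorder_insort_key_eq sorted_key_list_of_set_def
      linorder.sorted_key_list_of_set_def[OF linorder_class.linorder_axioms])

lemma sorted_key_list_of_set_empty: "sorted_key_list_of_set (key :: 'b \<Rightarrow> 'a::linorder) {} = []"
proof -
  interpret folding_insort_key "(\<le>) :: 'a \<Rightarrow> 'a \<Rightarrow> bool" "(<)" "{}" key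
    rewrites "linorder.sorted_key_list_of_set (\<le>) = sorted_key_list_of_set"
    by unfold_locales (simp_all add: linorder_sorted_key_list_of_set_eq)
  show ?thesis by (fact sorted_key_list_of_set_empty)
qed

lemma sorted_key_list_of_set_insert_greatest:
  fixes key :: "'b \<Rightarrow> 'a::linorder"
  assumes "finite A" "x \<notin> A" "inj_on key (insert x A)" "\<forall>y\<in>A. key y < key x"
  shows "sorted_key_list_of_set key (insert x A) = sorted_key_list_of_set key A @ [x]"
proof -
  interpret folding_insort_key "(\<le>) :: 'a \<Rightarrow> 'a \<Rightarrow> bool" "(<)" "insert x A" key
    rewrites "linorder.sorted_key_list_of_set (\<le>) = sorted_key_list_of_set"
    by unfold_locales (rule assms(3), rule linorder_sorted_key_list_of_set_eq)
  have "A \<subseteq> insert x A" by blast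
  then have "sorted_wrt (<) (map key (sorted_key_list_of_set key A))"
    "set (sorted_key_list_of_set key A) = A" "length (sorted_key_list_of_set key A) = card A"
    using assms(1) by simp_all
  then show ?thesis
    using assms by (subst sorted_key_list_of_set_unique[symmetric]) (auto simp: sorted_wrt_append)
qed

lemma card_partition_on_le:
  assumes "finite A" "partition_on A P"
  shows "card P \<le> card A"
proof -
  have blocks: "finite p \<and> p \<noteq> {}" if "p \<in> P" for p
    using assms that by (metis Union_upper finite_subset partition_onD1 partition_onD3)
  have "card P = (\<Sum>p\<in>P. 1)" by simp
  also have "\<dots> \<le> (\<Sum>p\<in>P. card p)"
    using blocks by (intro sum_mono) (simp add: Suc_leI card_gt_0_iff)
  also have "\<dots> = card A"
    unfolding partition_onD1[OF assms(2)]
    by (rule card_Union_disjoint[symmetric, OF partition_onD2[OF assms(2)]]) (use blocks in blast)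
  finally show ?thesis .
qed

lemma inj_on_Max_partition_on:
  assumes "finite A" "partition_on A P"
  shows "inj_on Max P"
proof (rule inj_onI)
  fix p q assume pq: "p \<in> P" "q \<in> P" "Max p = Max q"
  have "finite r \<and> r \<noteq> {}" if "r \<in> P" for r
    using assms that by (metis Union_upper finite_subset partition_onD1 partition_onD3)
  then have "Max p \<in> p \<inter> q"
    using pq by (metis IntI Max_in)
  then show "p = q"
    using pq partition_onD2[OF assms(2)] by (auto simp: disjoint_def)
qed

lemma bij_betw_partition_on_insert:
  assumes "m \<notin> A"
  shows "bij_betw (\<lambda>(C, P). insert (insert m C) P)
    (SIGMA C:Pow A. {P. partition_on (A - C) P}) {P. partition_on (insert m A) P}"
    (is "bij_betw ?h ?X ?Y")
proof (rule bij_betwI')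
  fix x y assume "x \<in> ?X" "y \<in> ?X"
  then obtain C P D Q where xy: "x = (C, P)" "y = (D, Q)" "C \<subseteq> A" "D \<subseteq> A"
    "partition_on (A - C) P" "partition_on (A - D) Q"
    by auto
  then have m: "m \<notin> \<Union>P" "m \<notin> \<Union>Q"
    using assms partition_onD1[OF xy(5)] partition_onD1[OF xy(6)] by auto
  show "(?h x = ?h y) = (x = y)"
  proof
    assume eq: "?h x = ?h y"
    then have "insert m C \<in> insert (insert m D) Q" using xy by auto
    then have "insert m C = insert m D" using m by blast
    moreover have "m \<notin> C" "m \<notin> D" using xy assms by auto
    ultimately have "C = D" by (simp add: insert_ident)
    moreover have "insert m C \<notin> P" "insert m C \<notin> Q" using m \<open>C = D\<close> by auto
    ultimately show "x = y" using eq xy by (simp add: insert_ident)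
  qed simp
next
  fix x assume "x \<in> ?X"
  then obtain C P where x: "x = (C, P)" "C \<subseteq> A" "partition_on (A - C) P" by auto
  then have "disjnt (insert m C) (\<Union>P)"
    using assms by (auto simp: disjnt_def dest: partition_onD1)
  moreover have "insert m A - insert m C = A - C" using assms by auto
  ultimately show "?h x \<in> ?Y"
    using x by (auto simp: partition_on_insert)
next
  fix P assume "P \<in> ?Y"
  then have P: "partition_on (insert m A) P" by simp
  then obtain B where B: "B \<in> P" "m \<in> B" by (auto dest: partition_onD1)
  have "disjnt B (\<Union>(P - {B}))"
    using partition_onD2[OF P] B(1) by (auto simp: disjoint_def disjnt_def)
  moreover have "P = insert B (P - {B})" using B by auto
  ultimately have "partition_on (insert m A - B) (P - {B})" "B \<subseteq> insert m A"
    using P partition_on_insert[of B "P - {B}"] by auto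
  moreover have "insert m A - B = A - (B - {m})" using B assms by auto
  ultimately show "\<exists>x\<in>?X. P = ?h x"
    using B by (intro bexI[of _ "(B - {m}, P - {B})"]) (auto simp: insert_absorb)
qed

lemma card_insert_block_partition_on:
  assumes "finite A" "m \<notin> A" "C \<subseteq> A" "partition_on (A - C) P"
  shows "card (insert m A) - card (insert (insert m C) P) = card C + (card (A - C) - card P)"
proof -
  have "finite (A - C)" "finite C"
    using assms(1,3) finite_subset by auto
  moreover have "insert m C \<notin> P"
    using assms(2,4) by (auto dest: partition_onD1)
  ultimately show ?thesis
    using assms card_partition_on_le[OF _ assms(4)] finite_elements[OF _ assms(4)] card_mono[OF assms(1,3)]
    by (simp add: card_Diff_subset)
qed

lemma partition_term_empty [simp]: "partition_term rp l f {} = l"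
  by (simp add: partition_term_def sorted_key_list_of_set_empty)

lemma partition_term_insert_greatest:
  assumes "finite A" "partition_on A P" "finite B" "B \<noteq> {}" "disjnt B A" "\<forall>a\<in>A. a < Max B"
  shows "partition_term rp l f (insert B P) = rp (partition_term rp l f P) (block_elt rp f B)"
proof -
  have "disjnt B (\<Union>P)"
    using assms(2,5) by (simp add: partition_onD1[symmetric])
  moreover have "A \<union> B - B = A"
    using assms(5) by (auto simp: disjnt_def)
  ultimately have "partition_on (A \<union> B) (insert B P)"
    using assms(2,4) by (simp add: partition_on_insert)
  then have "inj_on Max (insert B P)"
    using assms(1,3) by (intro inj_on_Max_partition_on) auto
  moreover have below: "Max Q < Max B" if "Q \<in> P" for Q
    using assms(1,2,6) that
    by (metis Max_in Union_upper finite_subset partition_onD1 partition_onD3 subsetD)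
  moreover have "B \<notin> P"
    using below by blast
  moreover have "finite P"
    using assms(1,2) by (rule finite_elements)
  ultimately have "sorted_key_list_of_set Max (insert B P) = sorted_key_list_of_set Max P @ [B]"
    by (intro sorted_key_list_of_set_insert_greatest) auto
  then show ?thesis
    by (simp add: partition_term_def)
qed

lemma sbrace_cong:
  assumes "\<And>i. 1 \<le> i \<Longrightarrow> i \<le> n \<Longrightarrow> f i = g i"
  shows "sbrace rp l f n = sbrace rp l g n"
  using assms
proof (induction n arbitrary: f g)
  case 0
  then show ?case by simp
next
  case (Suc n)
  have "sbrace rp l (f(i := rp (f i) (f (Suc n)))) n = sbrace rp l (g(i := rp (g i) (g (Suc n)))) n"
    if "i \<in> {1..n}" for i
    by (rule Suc.IH) (use Suc.prems that in auto)
  moreover have "sbrace rp l f n = sbrace rp l g n"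
    by (rule Suc.IH) (use Suc.prems in auto)
  ultimately show ?case
    using Suc.prems[of "Suc n"] by simp
qed

definition signed :: "nat \<Rightarrow> 'a::ab_group_add \<Rightarrow> 'a" where
  "signed k x = (if even k then x else - x)"

lemma signed_0 [simp]: "signed 0 x = x"
  by (simp add: signed_def)

lemma signed_Suc: "signed (Suc k) x = - signed k x"
  by (simp add: signed_def)

lemma signed_add: "signed (j + k) x = signed j (signed k x)"
  by (simp add: signed_def)

lemma signed_sum: "signed k (\<Sum>i\<in>A. g i) = (\<Sum>i\<in>A. signed k (g i))"
  by (simp add: signed_def sum_negf)

lemma (in vector_space) scale_minus_one_power: "scale ((- 1) ^ k) x = signed k x"
  by (induction k) (simp_all add: signed_Suc scale_minus_left)

locale right_pre_Lie_ring =
  fixes rp :: "'v::ab_group_add \<Rightarrow> 'v \<Rightarrow> 'v"  (infixl \<open>\<curvearrowleft>\<close> 70)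
  assumes add_rp: "(x + y) \<curvearrowleft> z = x \<curvearrowleft> z + y \<curvearrowleft> z"
    and rp_add: "x \<curvearrowleft> (y + z) = x \<curvearrowleft> y + x \<curvearrowleft> z"
    and pre_Lie: "(x \<curvearrowleft> y) \<curvearrowleft> z - x \<curvearrowleft> (y \<curvearrowleft> z) = (x \<curvearrowleft> z) \<curvearrowleft> y - x \<curvearrowleft> (z \<curvearrowleft> y)"
begin

lemma zero_rp [simp]: "0 \<curvearrowleft> z = 0"
  using add_rp[of 0 0 z] by simp

lemma rp_zero [simp]: "x \<curvearrowleft> 0 = 0"
  using rp_add[of x 0 0] by simp

lemma minus_rp: "(- x) \<curvearrowleft> z = - (x \<curvearrowleft> z)"
  using add_rp[of x "- x" z] by (simp add: minus_unique[symmetric])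

lemma diff_rp: "(x - y) \<curvearrowleft> z = x \<curvearrowleft> z - y \<curvearrowleft> z"
  using add_rp[of x "- y" z] by (simp add: minus_rp)

lemma sum_rp: "(\<Sum>i\<in>A. g i) \<curvearrowleft> z = (\<Sum>i\<in>A. g i \<curvearrowleft> z)"
  by (induction A rule: infinite_finite_induct) (simp_all add: add_rp)

lemma rp_sum: "x \<curvearrowleft> (\<Sum>i\<in>A. g i) = (\<Sum>i\<in>A. x \<curvearrowleft> g i)"
  by (induction A rule: infinite_finite_induct) (simp_all add: rp_add)

lemma signed_rp: "signed k x \<curvearrowleft> z = signed k (x \<curvearrowleft> z)"
  by (simp add: signed_def minus_rp)

definition brace :: "'v \<Rightarrow> 'v list \<Rightarrow> 'v" where
  "brace l xs = sbrace (\<curvearrowleft>) l (\<lambda>i. xs ! (i - 1)) (length xs)"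

lemma brace_Nil [simp]: "brace l [] = l"
  by (simp add: brace_def)

lemma brace_snoc:
  "brace l (xs @ [y]) = brace l xs \<curvearrowleft> y - (\<Sum>j<length xs. brace l (xs[j := xs ! j \<curvearrowleft> y]))"
proof -
  let ?n = "length xs"
  let ?g = "\<lambda>i. (xs @ [y]) ! (i - 1)"
  have "brace l (xs @ [y]) = sbrace (\<curvearrowleft>) l ?g ?n \<curvearrowleft> y
      - (\<Sum>i\<in>{1..?n}. sbrace (\<curvearrowleft>) l (?g(i := ?g i \<curvearrowleft> y)) ?n)"
    by (simp add: brace_def nth_append)
  also have "sbrace (\<curvearrowleft>) l ?g ?n = brace l xs"
    unfolding brace_def by (rule sbrace_cong) (auto simp: nth_append)
  also have "(\<Sum>i\<in>{1..?n}. sbrace (\<curvearrowleft>) l (?g(i := ?g i \<curvearrowleft> y)) ?n)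
      = (\<Sum>j<?n. sbrace (\<curvearrowleft>) l (?g(Suc j := ?g (Suc j) \<curvearrowleft> y)) ?n)"
    by (rule sum.reindex_bij_witness[where i=Suc and j="\<lambda>i. i - 1"]) auto
  also have "\<dots> = (\<Sum>j<?n. brace l (xs[j := xs ! j \<curvearrowleft> y]))"
    unfolding brace_def length_list_update
    by (intro sum.cong refl sbrace_cong) (auto simp: nth_append nth_list_update)
  finally show ?thesis .
qed

lemma brace_update_add:
  "i < length xs \<Longrightarrow> brace l (xs[i := p + q]) = brace l (xs[i := p]) + brace l (xs[i := q])"
proof (induction xs arbitrary: i p q rule: length_snoc_induct)
  case Nil
  then show ?case by simp
next
  case (snoc xs y)
  show ?case
  proof (cases "i < length xs")
    case True
    have "brace l (xs[i := u, j := xs[i := u] ! j \<curvearrowleft> y]) =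
        (if j = i then brace l (xs[i := u \<curvearrowleft> y]) else brace l ((xs[j := xs ! j \<curvearrowleft> y])[i := u]))"
      if "j < length xs" for j u
      using that True by (auto simp: list_update_swap)
    then have "(\<Sum>j<length xs. brace l (xs[i := p + q, j := xs[i := p + q] ! j \<curvearrowleft> y])) =
        (\<Sum>j<length xs. brace l (xs[i := p, j := xs[i := p] ! j \<curvearrowleft> y])) +
        (\<Sum>j<length xs. brace l (xs[i := q, j := xs[i := q] ! j \<curvearrowleft> y]))"
      unfolding sum.distrib[symmetric] by (intro sum.cong refl) (simp add: snoc add_rp True)
    then show ?thesis
      using True snoc by (simp add: list_update_append brace_snoc add_rp)
  next
    case False
    then have i: "i = length xs" using snoc by simp
    have "(\<Sum>j<length xs. brace l (xs[j := xs ! j \<curvearrowleft> (p + q)])) =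
        (\<Sum>j<length xs. brace l (xs[j := xs ! j \<curvearrowleft> p])) + (\<Sum>j<length xs. brace l (xs[j := xs ! j \<curvearrowleft> q]))"
      unfolding sum.distrib[symmetric] by (intro sum.cong refl) (simp add: snoc rp_add)
    then show ?thesis
      using i by (simp add: brace_snoc rp_add)
  qed
qed

lemma brace_snoc_snoc:
  fixes zs :: "'v list"
  defines "n \<equiv> length zs"
  shows "brace l (zs @ [a, b]) =
      (brace l zs \<curvearrowleft> a) \<curvearrowleft> b - brace l zs \<curvearrowleft> (a \<curvearrowleft> b)
    - (\<Sum>k<n. brace l (zs[k := zs ! k \<curvearrowleft> a]) \<curvearrowleft> b)
    - (\<Sum>k<n. brace l (zs[k := zs ! k \<curvearrowleft> b]) \<curvearrowleft> a)
    + (\<Sum>j<n. brace l (zs[j := (zs ! j \<curvearrowleft> b) \<curvearrowleft> a + zs ! j \<curvearrowleft> (a \<curvearrowleft> b)]))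
    + (\<Sum>j<n. \<Sum>k\<in>{..<n} - {j}. brace l (zs[j := zs ! j \<curvearrowleft> b, k := zs ! k \<curvearrowleft> a]))"
proof -
  have inner: "brace l (zs[j := zs ! j \<curvearrowleft> b] @ [a]) = brace l (zs[j := zs ! j \<curvearrowleft> b]) \<curvearrowleft> a
      - brace l (zs[j := (zs ! j \<curvearrowleft> b) \<curvearrowleft> a])
      - (\<Sum>k\<in>{..<n} - {j}. brace l (zs[j := zs ! j \<curvearrowleft> b, k := zs ! k \<curvearrowleft> a]))"
    if "j < n" for j
  proof -
    have "(\<Sum>k<n. brace l (zs[j := zs ! j \<curvearrowleft> b, k := zs[j := zs ! j \<curvearrowleft> b] ! k \<curvearrowleft> a]))
        = brace l (zs[j := (zs ! j \<curvearrowleft> b) \<curvearrowleft> a])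
          + (\<Sum>k\<in>{..<n} - {j}. brace l (zs[j := zs ! j \<curvearrowleft> b, k := zs ! k \<curvearrowleft> a]))"
      using that by (subst sum.remove[of _ j]) (auto simp: n_def intro!: sum.cong)
    then show ?thesis
      using that by (simp add: brace_snoc n_def)
  qed
  have "brace l (zs @ [a, b]) = brace l (zs @ [a]) \<curvearrowleft> b
      - (\<Sum>j<n. brace l (zs[j := zs ! j \<curvearrowleft> b] @ [a])) - brace l (zs @ [a \<curvearrowleft> b])"
    using brace_snoc[of l "zs @ [a]" b] by (simp add: n_def nth_append list_update_append)
  moreover have "brace l (zs @ [a]) \<curvearrowleft> b = (brace l zs \<curvearrowleft> a) \<curvearrowleft> b
      - (\<Sum>k<n. brace l (zs[k := zs ! k \<curvearrowleft> a]) \<curvearrowleft> b)"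
    by (simp add: brace_snoc n_def diff_rp sum_rp)
  moreover have "brace l (zs @ [a \<curvearrowleft> b]) = brace l zs \<curvearrowleft> (a \<curvearrowleft> b)
      - (\<Sum>j<n. brace l (zs[j := zs ! j \<curvearrowleft> (a \<curvearrowleft> b)]))"
    by (simp add: brace_snoc n_def)
  moreover have "(\<Sum>j<n. brace l (zs[j := (zs ! j \<curvearrowleft> b) \<curvearrowleft> a + zs ! j \<curvearrowleft> (a \<curvearrowleft> b)]))
      = (\<Sum>j<n. brace l (zs[j := (zs ! j \<curvearrowleft> b) \<curvearrowleft> a])) + (\<Sum>j<n. brace l (zs[j := zs ! j \<curvearrowleft> (a \<curvearrowleft> b)]))"
    unfolding sum.distrib[symmetric] by (intro sum.cong refl) (simp add: brace_update_add n_def)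
  moreover have "(\<Sum>j<n. brace l (zs[j := zs ! j \<curvearrowleft> b] @ [a]))
      = (\<Sum>j<n. brace l (zs[j := zs ! j \<curvearrowleft> b]) \<curvearrowleft> a) - (\<Sum>j<n. brace l (zs[j := (zs ! j \<curvearrowleft> b) \<curvearrowleft> a]))
        - (\<Sum>j<n. \<Sum>k\<in>{..<n} - {j}. brace l (zs[j := zs ! j \<curvearrowleft> b, k := zs ! k \<curvearrowleft> a]))"
    by (simp add: inner sum_subtractf)
  ultimately show ?thesis
    by (simp add: algebra_simps)
qed

lemma brace_swap_last: "brace l (zs @ [a, b]) = brace l (zs @ [b, a])"
proof -
  let ?n = "length zs"
  have "(\<Sum>j<?n. \<Sum>k\<in>{..<?n} - {j}. brace l (zs[j := zs ! j \<curvearrowleft> b, k := zs ! k \<curvearrowleft> a]))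
      = (\<Sum>j<?n. \<Sum>k\<in>{..<?n} - {j}. brace l (zs[j := zs ! j \<curvearrowleft> a, k := zs ! k \<curvearrowleft> b]))"
    unfolding set_diff_eq
    by (subst sum.swap_restrict) (auto simp: list_update_swap intro!: sum.cong)
  moreover have "(x \<curvearrowleft> b) \<curvearrowleft> a + x \<curvearrowleft> (a \<curvearrowleft> b) = (x \<curvearrowleft> a) \<curvearrowleft> b + x \<curvearrowleft> (b \<curvearrowleft> a)" for x
    using pre_Lie[of x a b] by (simp add: algebra_simps)
  moreover have "(brace l zs \<curvearrowleft> a) \<curvearrowleft> b - brace l zs \<curvearrowleft> (a \<curvearrowleft> b)
      = (brace l zs \<curvearrowleft> b) \<curvearrowleft> a - brace l zs \<curvearrowleft> (b \<curvearrowleft> a)"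
    by (rule pre_Lie)
  ultimately show ?thesis
    by (simp add: brace_snoc_snoc algebra_simps)
qed

lemma brace_snoc_mset_cong:
  assumes IH: "\<And>us vs. length us = length xs \<Longrightarrow> mset us = mset vs \<Longrightarrow> brace l us = brace l vs"
    and eq: "mset xs = mset ys"
  shows "brace l (xs @ [a]) = brace l (ys @ [a])"
proof -
  obtain p where p: "p permutes {..<length ys}" "permute_list p ys = xs"
    using mset_eq_permutation[OF eq] by blast
  have len: "length xs = length ys"
    using eq by (metis size_mset)
  have "brace l (xs[j := xs ! j \<curvearrowleft> a]) = brace l (ys[p j := ys ! p j \<curvearrowleft> a])" if "j < length ys" for j
  proof (rule IH)
    have "xs ! j = ys ! p j" "p j < length ys"
      using p that permute_list_nth[OF p(1) that] permutes_in_image[OF p(1)] by auto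
    then show "mset (xs[j := xs ! j \<curvearrowleft> a]) = mset (ys[p j := ys ! p j \<curvearrowleft> a])"
      using that len eq by (simp add: mset_update)
  qed simp
  then have "(\<Sum>j<length xs. brace l (xs[j := xs ! j \<curvearrowleft> a]))
      = (\<Sum>j<length ys. brace l (ys[p j := ys ! p j \<curvearrowleft> a]))"
    using len by simp
  also have "\<dots> = (\<Sum>j\<in>p ` {..<length ys}. brace l (ys[j := ys ! j \<curvearrowleft> a]))"
    by (simp add: sum.reindex[OF permutes_inj_on[OF p(1)]])
  also have "\<dots> = (\<Sum>j<length ys. brace l (ys[j := ys ! j \<curvearrowleft> a]))"
    by (simp add: permutes_image[OF p(1)])
  finally show ?thesis
    using IH[OF refl eq] by (simp add: brace_snoc)
qed

lemma brace_mset_cong: "mset xs = mset ys \<Longrightarrow> brace l xs = brace l ys"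
proof (induction xs arbitrary: ys rule: length_snoc_induct)
  case Nil
  then show ?case by simp
next
  case (snoc xs a)
  note IH = snoc.IH[rule_format]
  have "ys \<noteq> []"
    using snoc.prems by auto
  then obtain ys' b where ys: "ys = ys' @ [b]"
    by (metis rev_exhaust)
  show ?case
  proof (cases "a = b")
    case True
    then have "mset xs = mset ys'"
      using snoc.prems ys by simp
    then show ?thesis
      using brace_snoc_mset_cong[OF IH] ys True by blast
  next
    case False
    have "b \<in># mset (xs @ [a])"
      using snoc.prems ys by simp
    then have "b \<in> set xs"
      using False by simp
    define zs where "zs = remove1 b xs"
    have xs: "mset xs = mset (zs @ [b])"
      using \<open>b \<in> set xs\<close> by (simp add: zs_def)
    have ys': "mset (zs @ [a]) = mset ys'"
      using snoc.prems ys xs by (simp add: add_mset_commute)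
    have "length (zs @ [a]) = length xs"
      using mset_eq_length[OF xs] by simp
    then have IH': "\<And>us vs. length us = length (zs @ [a]) \<Longrightarrow> mset us = mset vs \<Longrightarrow> brace l us = brace l vs"
      using IH by presburger
    have "brace l (xs @ [a]) = brace l (zs @ [b, a])"
      using brace_snoc_mset_cong[OF IH xs] by simp
    also have "\<dots> = brace l (zs @ [a, b])"
      by (rule brace_swap_last)
    also have "\<dots> = brace l (ys' @ [b])"
      using brace_snoc_mset_cong[OF IH' ys'] by simp
    finally show ?thesis
      using ys by simp
  qed
qed

definition comb_sum :: "(nat \<Rightarrow> 'v) \<Rightarrow> nat set \<Rightarrow> 'v \<Rightarrow> 'v" where
  "comb_sum f C z = (\<Sum>ws\<in>permutations_of_set C. foldr (\<lambda>c acc. f c \<curvearrowleft> acc) ws z)"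

lemma comb_sum_empty [simp]: "comb_sum f {} z = z"
  by (simp add: comb_sum_def)

lemma comb_sum_remove:
  assumes "finite D" "D \<noteq> {}"
  shows "comb_sum f D z = (\<Sum>i\<in>D. comb_sum f (D - {i}) (f i \<curvearrowleft> z))"
proof -
  let ?g = "\<lambda>c acc. f c \<curvearrowleft> acc"
  have "comb_sum f D z = (\<Sum>ws\<in>permutations_of_set D. foldr ?g (rev ws) z)"
    unfolding comb_sum_def by (rule sum_permutations_of_set_rev[symmetric])
  also have "\<dots> = (\<Sum>ws\<in>(\<Union>i\<in>D. (#) i ` permutations_of_set (D - {i})). foldr ?g (rev ws) z)"
    using permutations_of_set_nonempty[OF assms(2)] by simp
  also have "\<dots> = (\<Sum>i\<in>D. \<Sum>ws\<in>(#) i ` permutations_of_set (D - {i}). foldr ?g (rev ws) z)"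
    by (rule sum.UNION_disjoint) (use assms in auto)
  also have "\<dots> = (\<Sum>i\<in>D. \<Sum>ws\<in>permutations_of_set (D - {i}). foldr ?g (rev ws) (f i \<curvearrowleft> z))"
    by (simp add: sum.reindex)
  also have "\<dots> = (\<Sum>i\<in>D. comb_sum f (D - {i}) (f i \<curvearrowleft> z))"
    unfolding comb_sum_def by (rule sum.cong[OF refl sum_permutations_of_set_rev])
  finally show ?thesis .
qed

lemma block_elt_insert_greatest:
  assumes "finite C" "\<forall>c\<in>C. c < m"
  shows "block_elt (\<curvearrowleft>) f (insert m C) = comb_sum f C (f m)"
proof -
  define cs where "cs = sorted_list_of_set C"
  have cs: "distinct cs" "set cs = C" "\<forall>c\<in>set cs. c < m"
    using assms by (simp_all add: cs_def)
  have "sorted_list_of_set (insert m C) = cs @ [m]"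
    using assms unfolding cs_def by (rule sorted_list_of_set_insert_greatest)
  then have "block_elt (\<curvearrowleft>) f (insert m C) = (\<Sum>\<sigma>\<in>{\<sigma>. \<sigma> permutes {1..length cs}}.
      foldr (\<lambda>i acc. f ((cs @ [m]) ! (\<sigma> i - 1)) \<curvearrowleft> acc) [1..<length cs + 1] (f m))"
    by (simp add: block_elt_def del: upt_Suc)
  also have "\<dots> = (\<Sum>\<sigma>\<in>{\<sigma>. \<sigma> permutes {1..length cs}}.
      foldr (\<lambda>c acc. f c \<curvearrowleft> acc) (map (\<lambda>i. cs ! (\<sigma> i - 1)) [1..<length cs + 1]) (f m))"
  proof (intro sum.cong refl)
    fix \<sigma> assume "\<sigma> \<in> {\<sigma>. \<sigma> permutes {1..length cs}}"
    then have "\<sigma> i - 1 < length cs" if "i \<in> set [1..<length cs + 1]" for i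
      using that permutes_in_image[of \<sigma> "{1..length cs}" i] by (auto simp del: upt_Suc)
    then show "foldr (\<lambda>i acc. f ((cs @ [m]) ! (\<sigma> i - 1)) \<curvearrowleft> acc) [1..<length cs + 1] (f m) =
        foldr (\<lambda>c acc. f c \<curvearrowleft> acc) (map (\<lambda>i. cs ! (\<sigma> i - 1)) [1..<length cs + 1]) (f m)"
      unfolding foldr_map o_def by (intro foldr_cong refl) (simp add: nth_append)
  qed
  also have "\<dots> = comb_sum f C (f m)"
    unfolding comb_sum_def using sum_permutes_nth[OF cs(1)] cs(2) by (simp del: upt_Suc)
  finally show ?thesis .
qed

definition brace_set :: "'v \<Rightarrow> (nat \<Rightarrow> 'v) \<Rightarrow> nat set \<Rightarrow> 'v" where
  "brace_set l f S = brace l (map f (sorted_list_of_set S))"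

lemma brace_update_sorted_list_of_set:
  assumes "finite S" "j < card S"
  defines "i \<equiv> sorted_list_of_set S ! j"
  shows "brace l ((map f (sorted_list_of_set S))[j := v]) = brace l (map f (sorted_list_of_set (S - {i})) @ [v])"
proof (rule brace_mset_cong)
  have "i \<in> S"
    using assms by (metis length_sorted_list_of_set nth_mem set_sorted_list_of_set)
  then have "mset (map f (sorted_list_of_set S)) = add_mset (f i) (image_mset f (mset_set (S - {i})))"
    using assms(1) by (simp add: mset_set.remove mset_sorted_list_of_set)
  then show "mset ((map f (sorted_list_of_set S))[j := v]) = mset (map f (sorted_list_of_set (S - {i})) @ [v])"
    using assms by (simp add: mset_update mset_sorted_list_of_set)
qed

lemma sum_signed_comb_sum_remove:
  assumes "finite D" "D \<noteq> {}"
  shows "(\<Sum>i\<in>D. signed (card (D - {i})) (x \<curvearrowleft> comb_sum f (D - {i}) (f i \<curvearrowleft> z)))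
    = - signed (card D) (x \<curvearrowleft> comb_sum f D z)"
proof -
  have "card D = Suc (card D - 1)"
    using assms by (simp add: card_gt_0_iff)
  then have "- signed (card D) (x \<curvearrowleft> comb_sum f D z) = signed (card D - 1) (x \<curvearrowleft> comb_sum f D z)"
    by (metis signed_Suc minus_minus)
  also have "\<dots> = (\<Sum>i\<in>D. signed (card (D - {i})) (x \<curvearrowleft> comb_sum f (D - {i}) (f i \<curvearrowleft> z)))"
    using assms by (simp add: comb_sum_remove rp_sum signed_sum)
  finally show ?thesis ..
qed

lemma brace_snoc_expansion:
  assumes "finite S"
  shows "brace l (map f (sorted_list_of_set S) @ [z]) =
    (\<Sum>C\<in>Pow S. signed (card C) (brace_set l f (S - C) \<curvearrowleft> comb_sum f C z))"
  using assms
proof (induction "card S" arbitrary: S z rule: less_induct)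
  case less
  let ?ss = "sorted_list_of_set S"
  let ?T = "\<lambda>C. signed (card C) (brace_set l f (S - C) \<curvearrowleft> comb_sum f C z)"
  have "(\<Sum>j<length ?ss. brace l ((map f ?ss)[j := map f ?ss ! j \<curvearrowleft> z]))
      = (\<Sum>i\<in>S. brace l (map f (sorted_list_of_set (S - {i})) @ [f i \<curvearrowleft> z]))"
    using less.prems sum_sorted_list_of_set_nth[OF less.prems,
        of "\<lambda>i. brace l (map f (sorted_list_of_set (S - {i})) @ [f i \<curvearrowleft> z])"]
    by (simp add: brace_update_sorted_list_of_set)
  also have "\<dots> = (\<Sum>i\<in>S. \<Sum>C\<in>Pow (S - {i}).
      signed (card C) (brace_set l f (S - {i} - C) \<curvearrowleft> comb_sum f C (f i \<curvearrowleft> z)))"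
  proof (intro sum.cong refl less.hyps)
    fix i assume "i \<in> S"
    then show "card (S - {i}) < card S"
      using less.prems by (intro card_Diff1_less)
    show "finite (S - {i})"
      using less.prems by simp
  qed
  also have "\<dots> = (\<Sum>D\<in>Pow S. \<Sum>i\<in>D. signed (card (D - {i}))
      (brace_set l f (S - {i} - (D - {i})) \<curvearrowleft> comb_sum f (D - {i}) (f i \<curvearrowleft> z)))"
    by (rule sum_Pow_remove_swap[OF less.prems])
  also have "\<dots> = (\<Sum>D\<in>Pow S. \<Sum>i\<in>D. signed (card (D - {i}))
      (brace_set l f (S - D) \<curvearrowleft> comb_sum f (D - {i}) (f i \<curvearrowleft> z)))"
    by (intro sum.cong refl) (simp add: Diff_insert2[symmetric] insert_absorb)
  also have "\<dots> = (\<Sum>D\<in>Pow S - {{}}. - ?T D)"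
  proof (rule sum.mono_neutral_cong_right)
    show "(\<Sum>i\<in>D. signed (card (D - {i})) (brace_set l f (S - D) \<curvearrowleft> comb_sum f (D - {i}) (f i \<curvearrowleft> z)))
        = - ?T D" if "D \<in> Pow S - {{}}" for D
      using that less.prems by (intro sum_signed_comb_sum_remove) (auto intro: finite_subset)
  qed (use less.prems in auto)
  finally have "(\<Sum>j<length ?ss. brace l ((map f ?ss)[j := map f ?ss ! j \<curvearrowleft> z])) = - (\<Sum>D\<in>Pow S - {{}}. ?T D)"
    by (simp add: sum_negf)
  moreover have "(\<Sum>C\<in>Pow S. ?T C) = ?T {} + (\<Sum>D\<in>Pow S - {{}}. ?T D)"
    using less.prems by (subst sum.remove[of _ "{}"]) auto
  ultimately show ?case
    by (simp add: brace_snoc brace_set_def)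
qed

lemma partition_term_insert_max_block:
  assumes "finite A" "\<forall>a\<in>A. a < m" "C \<subseteq> A" "partition_on (A - C) P"
  shows "partition_term (\<curvearrowleft>) l f (insert (insert m C) P) = partition_term (\<curvearrowleft>) l f P \<curvearrowleft> comb_sum f C (f m)"
proof -
  have fin: "finite C" "finite (A - C)"
    using assms(1,3) finite_subset by auto
  have "Max (insert m C) = m"
    using assms(2,3) fin by (intro Max_eqI) (auto simp: less_imp_le subset_iff)
  then have "partition_term (\<curvearrowleft>) l f (insert (insert m C) P)
      = partition_term (\<curvearrowleft>) l f P \<curvearrowleft> block_elt (\<curvearrowleft>) f (insert m C)"
    using fin(1) assms(2) by (intro partition_term_insert_greatest[OF fin(2) assms(4)]) (auto simp: disjnt_def)
  also have "block_elt (\<curvearrowleft>) f (insert m C) = comb_sum f C (f m)"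
    using fin(1) assms(2,3) by (intro block_elt_insert_greatest) auto
  finally show ?thesis .
qed

lemma brace_set_partition_expansion:
  assumes "finite S"
  shows "brace_set l f S = (\<Sum>P | partition_on S P. signed (card S - card P) (partition_term (\<curvearrowleft>) l f P))"
  using assms
proof (induction "card S" arbitrary: S rule: less_induct)
  case less
  show ?case
  proof (cases "S = {}")
    case True
    then have "{P. partition_on S P} = {{}}"
      by (simp add: partition_on_empty)
    then show ?thesis
      using True by (simp only:) (simp add: brace_set_def)
  next
    case False
    define m where "m = Max S"
    define S' where "S' = S - {m}"
    have S: "S = insert m S'" "m \<notin> S'" "finite S'" "\<forall>c\<in>S'. c < m"
      using less.prems Max_in[OF less.prems False] by (auto simp: m_def S'_def le_neq_implies_less)
    define g where "g P = signed (card S - card P) (partition_term (\<curvearrowleft>) l f P)" for P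
    have summand: "signed (card C) (brace_set l f (S' - C) \<curvearrowleft> comb_sum f C (f m))
        = (\<Sum>P | partition_on (S' - C) P. g (insert (insert m C) P))" if "C \<subseteq> S'" for C
    proof -
      have "card (S' - C) < card S"
        using S by (metis Diff_subset card_mono card_insert_disjoint le_imp_less_Suc)
      then have "signed (card C) (brace_set l f (S' - C) \<curvearrowleft> comb_sum f C (f m))
          = (\<Sum>P | partition_on (S' - C) P.
              signed (card C + (card (S' - C) - card P)) (partition_term (\<curvearrowleft>) l f P \<curvearrowleft> comb_sum f C (f m)))"
        using less.hyps S(3) by (simp add: sum_rp signed_rp signed_sum signed_add)
      also have "\<dots> = (\<Sum>P | partition_on (S' - C) P. g (insert (insert m C) P))"
        using that S card_insert_block_partition_on[of S' m C]
        by (intro sum.cong refl) (simp add: g_def partition_term_insert_max_block)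
      finally show ?thesis .
    qed
    have "brace_set l f S = brace l (map f (sorted_list_of_set S') @ [f m])"
      unfolding brace_set_def S(1) sorted_list_of_set_insert_greatest[OF S(3,4)] by simp
    also have "\<dots> = (\<Sum>C\<in>Pow S'. signed (card C) (brace_set l f (S' - C) \<curvearrowleft> comb_sum f C (f m)))"
      by (rule brace_snoc_expansion[OF S(3)])
    also have "\<dots> = (\<Sum>C\<in>Pow S'. \<Sum>P | partition_on (S' - C) P. g (insert (insert m C) P))"
      using summand by simp
    also have "\<dots> = (\<Sum>(C, P)\<in>(SIGMA C:Pow S'. {P. partition_on (S' - C) P}). g (insert (insert m C) P))"
      using S(3) by (intro sum.Sigma) (auto simp: finitely_many_partition_on)
    also have "\<dots> = (\<Sum>P | partition_on S P. g P)"
      using sum.reindex_bij_betw[OF bij_betw_partition_on_insert[OF S(2)], of g] S(1)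
      by (simp add: case_prod_unfold)
    finally show ?thesis
      by (simp add: g_def)
  qed
qed

lemma sbrace_partition_expansion:
  "sbrace (\<curvearrowleft>) l f n = (\<Sum>P | partition_on {1..n} P. signed (n - card P) (partition_term (\<curvearrowleft>) l f P))"
proof -
  have "sorted_list_of_set {1..n} = [1..<n + 1]"
    by (simp add: atLeastLessThanSuc_atLeastAtMost[symmetric] del: upt_Suc)
  then have "brace_set l f {1..n} = sbrace (\<curvearrowleft>) l (\<lambda>i. map f [1..<n + 1] ! (i - 1)) n"
    by (simp add: brace_set_def brace_def del: upt_Suc)
  also have "\<dots> = sbrace (\<curvearrowleft>) l f n"
    by (rule sbrace_cong) (simp del: upt_Suc)
  finally show ?thesis
    using brace_set_partition_expansion[of "{1..n}" l f] by simp
qed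

end

lemma right_pre_Lie_ring_if_right_pre_Lie:
  "right_pre_Lie scale rp \<Longrightarrow> right_pre_Lie_ring rp"
  unfolding right_pre_Lie_def by unfold_locales auto

theorem corollary2p2:
  fixes scale :: "'k::field_char_0 \<Rightarrow> 'v::ab_group_add \<Rightarrow> 'v"
    and rp :: "'v \<Rightarrow> 'v \<Rightarrow> 'v"
    and l :: 'v and f :: "nat \<Rightarrow> 'v" and n :: nat
  assumes "right_pre_Lie scale rp"
  shows "sbrace rp l f n =
    (\<Sum>\<P> \<in> {\<P>. partition_on {1..n} \<P>}.
       scale ((-1) ^ (n - card \<P>)) (partition_term rp l f \<P>))"
proof -
  interpret vector_space scale
    using assms by (simp add: right_pre_Lie_def)
  interpret right_pre_Lie_ring rp
    using assms by (rule right_pre_Lie_ring_if_right_pre_Lie)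
  show ?thesis
    by (simp add: scale_minus_one_power sbrace_partition_expansion)
qed

end
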